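(* There exist time-inconsistent planning models $(G,w,s,t,\beta)$ in which the number of pairwise distinct costs of feasible $s$-$t$ paths is exponential in the number $n$ of vertices of $G$. (In particular, the difference between the largest and smallest cost of a feasible $s$-$t$ path can be exponential in $n$.)
   Context: A time-inconsistent planning model is a tuple $(G,w,s,t,\beta)$ where $G$ is a finite directed acyclic graph with $n$ vertices, $w:E(G)\to\mathbb{N}$ assigns a cost to each arc, $s,t\in V(G)$ are the start and target vertices, and $\beta\le 1$ is the present-bias parameter. For a vertex $v$ and a $v$-$t$ path $P$ with arcs $e_1,\dots,e_m$ (in order), the perceived cost of $P$ is $\zeta(P)=w(e_1)+\beta\sum_{i=2}^m w(e_i)$, and $\zeta(v)=\min\{\zeta(P): P \text{ a } v\text{-}t \text{ path}\}$. A $v$-$t$ path of perceived cost $\zeta(v)$ is called a perceived path. The agent starts at $s$; at a vertex $v\neq t$ it chooses some perceived $v$-$t$ path and traverses its first arc, and repeats until reaching $t$. An $s$-$t$ path $v_0=s,v_1,\dots,v_m=t$ is feasible if for every $i<m$ the arc $v_iv_{i+1}$ is the first arc of some perceived $v_i$-$t$ path, i.e., the agent may follow it under some way of breaking ties. The (actual) cost of a path is the sum of $w$ over its arcs. *)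

theory Defs
  imports Complex_Main
begin

definition arcs :: "'v list \<Rightarrow> ('v \<times> 'v) list" where
  "arcs xs = zip xs (tl xs)"

definition is_path :: "('v \<times> 'v) set \<Rightarrow> 'v \<Rightarrow> 'v \<Rightarrow> 'v list \<Rightarrow> bool" where
  "is_path E u v xs \<longleftrightarrow> xs \<noteq> [] \<and> hd xs = u \<and> last xs = v \<and> set (arcs xs) \<subseteq> E"

definition path_cost :: "('v \<times> 'v \<Rightarrow> nat) \<Rightarrow> 'v list \<Rightarrow> nat" where
  "path_cost w xs = sum_list (map w (arcs xs))"

definition perceived_cost :: "('v \<times> 'v \<Rightarrow> nat) \<Rightarrow> real \<Rightarrow> 'v list \<Rightarrow> real" where
  "perceived_cost w \<beta> xs =
     (case arcs xs of [] \<Rightarrow> 0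
      | e # es \<Rightarrow> real (w e) + \<beta> * real (sum_list (map w es)))"

definition perceived_path :: "('v \<times> 'v) set \<Rightarrow> ('v \<times> 'v \<Rightarrow> nat) \<Rightarrow> real \<Rightarrow> 'v \<Rightarrow> 'v \<Rightarrow> 'v list \<Rightarrow> bool" where
  "perceived_path E w \<beta> t v P \<longleftrightarrow> is_path E v t P \<and>
     (\<forall>Q. is_path E v t Q \<longrightarrow> perceived_cost w \<beta> P \<le> perceived_cost w \<beta> Q)"

definition feasible_path :: "('v \<times> 'v) set \<Rightarrow> ('v \<times> 'v \<Rightarrow> nat) \<Rightarrow> real \<Rightarrow> 'v \<Rightarrow> 'v \<Rightarrow> 'v list \<Rightarrow> bool" where
  "feasible_path E w \<beta> s t xs \<longleftrightarrow> is_path E s t xs \<and>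
     (\<forall>i. Suc i < length xs \<longrightarrow>
        (\<exists>P. perceived_path E w \<beta> t (xs ! i) P \<and> length P \<ge> 2 \<and> P ! 1 = xs ! Suc i))"

definition planning_model :: "nat \<Rightarrow> (nat \<times> nat) set \<Rightarrow> nat \<Rightarrow> nat \<Rightarrow> real \<Rightarrow> bool" where
  "planning_model n E s t \<beta> \<longleftrightarrow> E \<subseteq> {..<n} \<times> {..<n} \<and> acyclic E \<and>
     s \<in> {..<n} \<and> t \<in> {..<n} \<and> 0 < \<beta> \<and> \<beta> \<le> 1"

end

theory Submission
  imports Defs
begin

text \<open>On the vertices 0, ..., 2k with target 0, level i < k offers two ways from 2i+2 down
  to 2i: the direct arc of cost 2^i, or the detour through 2i+1 with arcs of cost 0 and
  2^(i+1). With present bias 1/2 both first arcs are perceived at the same cost, so the agent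
  is indifferent everywhere and every path from 2k to 0 is feasible. Taking the detour at a
  set S of levels costs 2^k - 1 + (sum of 2^i over i in S), so the 2k+1 vertices produce
  2^k distinct costs of feasible paths.\<close>

lemma arcs_Cons_Cons [simp]: "arcs (x # y # xs) = (x, y) # arcs (y # xs)"
  and arcs_singleton [simp]: "arcs [x] = []"
  by (simp_all add: arcs_def)

lemma arcs_Cons: "xs \<noteq> [] \<Longrightarrow> arcs (x # xs) = (x, hd xs) # arcs xs"
  by (cases xs) auto

lemma is_path_singleton [simp]: "is_path E u v [x] \<longleftrightarrow> u = x \<and> v = x"
  by (auto simp: is_path_def)

lemma is_path_Cons:
  "xs \<noteq> [] \<Longrightarrow> is_path E u v (x # xs) \<longleftrightarrow> u = x \<and> (x, hd xs) \<in> E \<and> is_path E (hd xs) v xs"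
  by (cases xs) (auto simp: is_path_def)

lemma path_cost_singleton [simp]: "path_cost w [x] = 0"
  by (simp add: path_cost_def)

lemma path_cost_Cons: "xs \<noteq> [] \<Longrightarrow> path_cost w (x # xs) = w (x, hd xs) + path_cost w xs"
  by (simp add: path_cost_def arcs_Cons)

lemma perceived_cost_Cons:
  "xs \<noteq> [] \<Longrightarrow> perceived_cost w \<beta> (x # xs) = real (w (x, hd xs)) + \<beta> * real (path_cost w xs)"
  by (simp add: perceived_cost_def path_cost_def arcs_Cons)

lemma is_path_nth_arc:
  assumes "is_path E u v xs" and "Suc i < length xs"
  shows "(xs ! i, xs ! Suc i) \<in> E"
proof -
  have "(xs ! i, xs ! Suc i) = arcs xs ! i" and "i < length (arcs xs)"
    using assms(2) by (simp_all add: arcs_def nth_tl)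
  then show ?thesis
    using assms(1) nth_mem unfolding is_path_def by fastforce
qed

lemma path_cost_ge_potential:
  assumes potential: "\<And>a b. (a, b) \<in> E \<Longrightarrow> \<phi> a \<le> w (a, b) + \<phi> b"
    and "is_path E u v xs"
  shows "\<phi> u \<le> path_cost w xs + \<phi> v"
  using assms(2)
proof (induction xs arbitrary: u)
  case Nil
  then show ?case by (simp add: is_path_def)
next
  case (Cons x xs)
  show ?case
  proof (cases "xs = []")
    case True
    with Cons.prems show ?thesis by simp
  next
    case False
    with Cons.prems have "u = x" "(x, hd xs) \<in> E" "is_path E (hd xs) v xs"
      by (simp_all add: is_path_Cons)
    with Cons.IH potential[of x "hd xs"] False show ?thesis
      by (fastforce simp: path_cost_Cons)
  qed
qed

text \<open>\<phi> is the distance to t, and at every vertex all outgoing arcs look equally good to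
  the biased agent.\<close>

locale indifferent_distance =
  fixes E :: "('v \<times> 'v) set" and w :: "'v \<times> 'v \<Rightarrow> nat" and \<beta> :: real
    and t :: 'v and \<phi> :: "'v \<Rightarrow> nat"
  assumes potential: "\<And>a b. (a, b) \<in> E \<Longrightarrow> \<phi> a \<le> w (a, b) + \<phi> b"
    and potential_target: "\<phi> t = 0"
    and distance_attained: "\<And>a b. (a, b) \<in> E \<Longrightarrow> \<exists>P. is_path E b t P \<and> path_cost w P = \<phi> b"
    and indifferent: "\<And>a b b'. (a, b) \<in> E \<Longrightarrow> (a, b') \<in> E \<Longrightarrow>
      real (w (a, b)) + \<beta> * real (\<phi> b) = real (w (a, b')) + \<beta> * real (\<phi> b')"
    and target_sink: "\<And>b. (t, b) \<notin> E"
    and bias_nonneg: "0 \<le> \<beta>"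
begin

lemma arc_starts_perceived_path:
  assumes ab: "(a, b) \<in> E"
  shows "\<exists>P. perceived_path E w \<beta> t a P \<and> 2 \<le> length P \<and> P ! 1 = b"
proof -
  obtain R where R: "is_path E b t R" "path_cost w R = \<phi> b"
    using distance_attained[OF ab] by blast
  then obtain R' where R': "R = b # R'"
    by (cases R) (auto simp: is_path_def)
  have "perceived_cost w \<beta> (a # R) \<le> perceived_cost w \<beta> Q" if Q: "is_path E a t Q" for Q
  proof -
    from Q obtain Q' where Q': "Q = a # Q'"
      by (cases Q) (auto simp: is_path_def)
    moreover have "a \<noteq> t"
      using ab target_sink by blast
    ultimately have "Q' \<noteq> []"
      using Q by auto
    with Q Q' have ab': "(a, hd Q') \<in> E" and "is_path E (hd Q') t Q'"
      by (simp_all add: is_path_Cons)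
    then have "\<phi> (hd Q') \<le> path_cost w Q'"
      using path_cost_ge_potential[of E \<phi> w] potential potential_target by fastforce
    then have "\<beta> * real (\<phi> (hd Q')) \<le> \<beta> * real (path_cost w Q')"
      using bias_nonneg by (simp add: mult_left_mono)
    with indifferent[OF ab ab'] show ?thesis
      using \<open>Q' \<noteq> []\<close> Q' R R' by (simp add: perceived_cost_Cons)
  qed
  moreover have "is_path E a t (a # R)"
    using R R' ab by (simp add: is_path_Cons)
  ultimately show ?thesis
    using R' by (intro exI[of _ "a # R"]) (auto simp: perceived_path_def)
qed

lemma path_feasible:
  assumes "is_path E s t xs"
  shows "feasible_path E w \<beta> s t xs"
  using assms arc_starts_perceived_path is_path_nth_arc[OF assms]
  by (simp add: feasible_path_def)

end

lemma reachable_of_mem_path: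
  assumes "is_path E u v xs" and "z \<in> set xs"
  shows "(u, z) \<in> E\<^sup>*"
  using assms
proof (induction xs arbitrary: u)
  case Nil
  then show ?case by simp
next
  case (Cons x xs)
  show ?case
  proof (cases "xs = []")
    case True
    with Cons.prems show ?thesis by simp
  next
    case False
    with Cons.prems have "u = x" "(x, hd xs) \<in> E" "is_path E (hd xs) v xs"
      by (simp_all add: is_path_Cons)
    with Cons.prems(2) Cons.IH show ?thesis
      by (auto intro: converse_rtrancl_into_rtrancl)
  qed
qed

lemma distinct_path_if_acyclic:
  assumes "acyclic E" and "is_path E u v xs"
  shows "distinct xs"
  using assms(2)
proof (induction xs arbitrary: u)
  case Nil
  then show ?case by simp
next
  case (Cons x xs)
  show ?case
  proof (cases "xs = []")
    case True
    then show ?thesis by simp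
  next
    case False
    with Cons.prems have arc: "(x, hd xs) \<in> E" and tail: "is_path E (hd xs) v xs"
      by (simp_all add: is_path_Cons)
    have "x \<notin> set xs"
    proof
      assume "x \<in> set xs"
      then have "(x, x) \<in> E\<^sup>+"
        using arc reachable_of_mem_path[OF tail] by (meson rtrancl_into_trancl2)
      with assms(1) show False
        by (simp add: acyclic_def)
    qed
    with Cons.IH tail show ?thesis by simp
  qed
qed

lemma set_path_subset:
  assumes "is_path E u v xs"
  shows "set xs \<subseteq> insert u (snd ` E)"
proof
  fix z
  assume "z \<in> set xs"
  with assms have "(u, z) \<in> E\<^sup>*"
    by (rule reachable_of_mem_path)
  then show "z \<in> insert u (snd ` E)"
    by (cases rule: rtranclE) force+
qed

lemma finite_paths_if_acyclic:
  assumes "finite E" and "acyclic E"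
  shows "finite {P. is_path E s t P}"
proof (rule finite_subset)
  show "{P. is_path E s t P} \<subseteq> {xs. set xs \<subseteq> insert s (snd ` E) \<and> distinct xs}"
    using distinct_path_if_acyclic[OF assms(2)] by (auto dest: set_path_subset)
  show "finite {xs. set xs \<subseteq> insert s (snd ` E) \<and> distinct xs}"
    using assms(1) by (simp add: finite_subset_distinct)
qed

lemma finite_feasible_path_costs:
  assumes "finite E" and "acyclic E"
  shows "finite {path_cost w P | P. feasible_path E w \<beta> s t P}"
proof (rule finite_subset)
  show "{path_cost w P | P. feasible_path E w \<beta> s t P} \<subseteq> path_cost w ` {P. is_path E s t P}"
    unfolding feasible_path_def by blast
  show "finite (path_cost w ` {P. is_path E s t P})"
    using finite_paths_if_acyclic[OF assms] by simp
qed

definition ladder :: "nat \<Rightarrow> (nat \<times> nat) set" where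
  "ladder k = (\<Union>i<k. {(2*i + 2, 2*i), (2*i + 2, 2*i + 1), (2*i + 1, 2*i)})"

definition ladder_cost :: "nat \<times> nat \<Rightarrow> nat" where
  "ladder_cost e = (case e of (a, b) \<Rightarrow>
     if a = b + 2 then 2 ^ (b div 2) else if odd a then 2 * 2 ^ (b div 2) else 0)"

definition ladder_dist :: "nat \<Rightarrow> nat" where
  "ladder_dist v = (if even v then 2 ^ (v div 2) - 1 else 3 * 2 ^ (v div 2) - 1)"

text \<open>The path that takes the detour at level j < i exactly when bit j of m is set.\<close>

fun ladder_path :: "nat \<Rightarrow> nat \<Rightarrow> nat list" where
  "ladder_path 0 m = [0]"
| "ladder_path (Suc i) m =
     (if 2 ^ i \<le> m then (2*i + 2) # (2*i + 1) # ladder_path i (m - 2 ^ i)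
      else (2*i + 2) # ladder_path i m)"

lemma mem_ladder:
  "(a, b) \<in> ladder k \<longleftrightarrow>
     (\<exists>i<k. (a = 2*i + 2 \<and> b = 2*i) \<or> (a = 2*i + 2 \<and> b = 2*i + 1) \<or> (a = 2*i + 1 \<and> b = 2*i))"
  by (auto simp: ladder_def)

lemma finite_ladder: "finite (ladder k)"
  by (simp add: ladder_def)

lemma acyclic_ladder: "acyclic (ladder k)"
proof -
  have "(ladder k)\<inverse> \<subseteq> less_than"
    by (auto simp: mem_ladder)
  then have "wf ((ladder k)\<inverse>)"
    by (rule wf_subset[OF wf_less_than])
  then show ?thesis
    using wf_acyclic acyclic_converse by blast
qed

text \<open>Vertices are written in the simp normal form Suc (2*i) of 2*i + 1.\<close>

lemma ladder_cost_simps [simp]: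
  "ladder_cost (Suc (Suc (2*i)), 2*i) = 2 ^ i"
  "ladder_cost (Suc (Suc (2*i)), Suc (2*i)) = 0"
  "ladder_cost (Suc (2*i), 2*i) = 2 * 2 ^ i"
  by (auto simp: ladder_cost_def)

lemma ladder_dist_simps [simp]:
  "ladder_dist (2*i) = 2 ^ i - 1"
  "ladder_dist (Suc (2*i)) = 3 * 2 ^ i - 1"
  "ladder_dist (Suc (Suc (2*i))) = 2 * 2 ^ i - 1"
  using ladder_dist_def[of "2 * Suc i"] by (simp_all add: ladder_dist_def)

lemma ladder_path_ne [simp]: "ladder_path i m \<noteq> []"
  and hd_ladder_path [simp]: "hd (ladder_path i m) = 2 * i"
  by (cases i; simp)+

lemma is_path_ladder_path: "i \<le> k \<Longrightarrow> is_path (ladder k) (2*i) 0 (ladder_path i m)"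
  by (induction i m rule: ladder_path.induct)
    (auto simp: is_path_Cons mem_ladder Suc_double_not_eq_double double_not_eq_Suc_double)

lemma path_cost_ladder_path: "m < 2 ^ i \<Longrightarrow> path_cost ladder_cost (ladder_path i m) = 2 ^ i - 1 + m"
  by (induction i m rule: ladder_path.induct) (auto simp: path_cost_Cons)

lemma ladder_potential: "(a, b) \<in> ladder k \<Longrightarrow> ladder_dist a \<le> ladder_cost (a, b) + ladder_dist b"
  by (auto simp: mem_ladder)

lemma ladder_indifferent:
  "(a, b) \<in> ladder k \<Longrightarrow> (a, b') \<in> ladder k \<Longrightarrow>
     2 * ladder_cost (a, b) + ladder_dist b = 2 * ladder_cost (a, b') + ladder_dist b'"
  by (auto simp: mem_ladder Suc_double_not_eq_double double_not_eq_Suc_double)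

lemma ladder_distance_attained:
  assumes "(a, b) \<in> ladder k"
  shows "\<exists>P. is_path (ladder k) b 0 P \<and> path_cost ladder_cost P = ladder_dist b"
proof -
  obtain i where i: "i < k" "b = 2*i \<or> b = Suc (2*i)"
    using assms by (auto simp: mem_ladder)
  let ?P = "ladder_path i 0"
  have P: "is_path (ladder k) (2*i) 0 ?P" "path_cost ladder_cost ?P = ladder_dist (2*i)"
    using i(1) by (simp_all add: is_path_ladder_path path_cost_ladder_path)
  moreover have "(Suc (2*i), 2*i) \<in> ladder k"
    using i(1) by (auto simp: mem_ladder)
  ultimately have "is_path (ladder k) (Suc (2*i)) 0 (Suc (2*i) # ?P)"
    and "path_cost ladder_cost (Suc (2*i) # ?P) = ladder_dist (Suc (2*i))"
    by (simp_all add: is_path_Cons path_cost_Cons)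
  with P i(2) show ?thesis
    by blast
qed

lemma indifferent_distance_ladder: "indifferent_distance (ladder k) ladder_cost (1/2) 0 ladder_dist"
proof
  fix a b b'
  assume "(a, b) \<in> ladder k" "(a, b') \<in> ladder k"
  then have "real (2 * ladder_cost (a, b) + ladder_dist b) = real (2 * ladder_cost (a, b') + ladder_dist b')"
    by (metis ladder_indifferent)
  then show "real (ladder_cost (a, b)) + 1/2 * real (ladder_dist b)
           = real (ladder_cost (a, b')) + 1/2 * real (ladder_dist b')"
    by simp
next
  show "(0, b) \<notin> ladder k" for b
    by (simp add: mem_ladder)
next
  show "ladder_dist 0 = 0"
    by (simp add: ladder_dist_def)
qed (simp_all add: ladder_potential ladder_distance_attained)

lemma ladder_feasible_costs:
  "{2 ^ k - 1 ..< 2 ^ k - 1 + 2 ^ k}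
     \<subseteq> {path_cost ladder_cost P | P. feasible_path (ladder k) ladder_cost (1/2) (2*k) 0 P}"
proof
  fix x :: nat
  assume "x \<in> {2 ^ k - 1 ..< 2 ^ k - 1 + 2 ^ k}"
  then obtain m where m: "m < 2 ^ k" "x = 2 ^ k - 1 + m"
    by (metis atLeastLessThan_iff le_Suc_ex nat_add_left_cancel_less)
  have "feasible_path (ladder k) ladder_cost (1/2) (2*k) 0 (ladder_path k m)"
    by (rule indifferent_distance.path_feasible[OF indifferent_distance_ladder is_path_ladder_path]) simp
  moreover have "path_cost ladder_cost (ladder_path k m) = x"
    using m by (simp add: path_cost_ladder_path)
  ultimately show "x \<in> {path_cost ladder_cost P | P. feasible_path (ladder k) ladder_cost (1/2) (2*k) 0 P}"
    by blast
qed

lemma five_fourths_power_le: "1 \<le> k \<Longrightarrow> (5/4 :: real) ^ (2*k + 1) \<le> 2 ^ k"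
proof (induction k rule: dec_induct)
  case base
  then show ?case by (simp add: power3_eq_cube)
next
  case (step k)
  have "(5/4 :: real) ^ (2 * Suc k + 1) = (5/4) ^ (2*k + 1) * (25/16)"
    by (simp add: power_add power2_eq_square)
  also have "\<dots> \<le> 2 ^ k * 2"
    using step.IH by (intro mult_mono) auto
  finally show ?case by simp
qed

lemma planning_model_ladder: "planning_model (2*k + 1) (ladder k) (2*k) 0 (1/2)"
proof -
  have "ladder k \<subseteq> {..<2*k + 1} \<times> {..<2*k + 1}"
    by (auto simp: ladder_def)
  with acyclic_ladder show ?thesis
    by (simp add: planning_model_def)
qed

lemma card_ladder_feasible_costs:
  "2 ^ k \<le> card {path_cost ladder_cost P | P. feasible_path (ladder k) ladder_cost (1/2) (2*k) 0 P}"
  using card_mono[OF finite_feasible_path_costs[OF finite_ladder acyclic_ladder] ladder_feasible_costs]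
  by simp

theorem theorem1:
  shows "\<exists>c::real. c > 1 \<and> (\<forall>N::nat. \<exists>n E w s t \<beta>. n \<ge> N \<and> planning_model n E s t \<beta> \<and>
           real (card {path_cost w P | P. feasible_path E w \<beta> s t P}) \<ge> c ^ n)"
proof (intro exI[of _ "5/4"] conjI allI)
  fix N :: nat
  define k where "k = Suc N"
  let ?C = "{path_cost ladder_cost P | P. feasible_path (ladder k) ladder_cost (1/2) (2*k) 0 P}"
  have "(5/4 :: real) ^ (2*k + 1) \<le> 2 ^ k"
    by (rule five_fourths_power_le) (simp add: k_def)
  also have "\<dots> = real (2 ^ k)"
    by simp
  also have "\<dots> \<le> real (card ?C)"
    using card_ladder_feasible_costs by (rule of_nat_mono)
  finally have "(5/4 :: real) ^ (2*k + 1) \<le> real (card ?C)" .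
  moreover have "N \<le> 2*k + 1"
    by (simp add: k_def)
  ultimately show "\<exists>n E w s t \<beta>. n \<ge> N \<and> planning_model n E s t \<beta> \<and>
           real (card {path_cost w P | P. feasible_path E w \<beta> s t P}) \<ge> (5/4) ^ n"
    using planning_model_ladder by blast
qed simp

end
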